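(* Let $\mu$ be a partition with at most $n$ parts and let $T_\mu$ be the tableau of shape $\mu$ whose cells in the $k$-th row are all filled with the number $k$. Then $T_\mu$ is a semistandard C-tableau and $T_\mu\cdot\emptyset=\mu$. Conversely, if $J$ is a semistandard C-tableau of shape $\mu$ such that $J\cdot\emptyset$ is defined and equals a partition $\lambda$, then $\lambda=\mu$ and $J=T_\mu$. Moreover, if $\mu\neq\emptyset$, then every intermediate diagram occurring during the computation of $T_\mu\cdot\emptyset$ (after the first step) is nonempty.
   Context: Fix $n\ge1$ and the ordered alphabet $1<2<\cdots<n<\bar n<\cdots<\bar 1$, where $\bar k := 2n+1-k$ for $1\le k\le n$. For a column $J$ (a strictly increasing sequence of letters) and a letter $a\in J$, $\mathrm{pos}_J(a)$ is the position of $a$ in $J$ counted from the top, and $|J|$ is the length of $J$. A semistandard C-tableau of shape $\mu$ (a Young diagram with at most $n$ rows) is a filling of $\mu$ by letters with rows weakly increasing and columns strictly increasing, such that: (C-1) for every column $J$ and every $k\le n$ with $k,\bar k\in J$, $\mathrm{pos}_J(k)+(|J|+1-\mathrm{pos}_J(\bar k))\le k$; (C-2) for every pair of adjacent columns $L$ (left), $R$ (right) and every $1\le a\le b\le n$ with $a\in L$, $\bar a\in R$, $b,\bar b\in L\cup R$, if either $\mathrm{pos}_L(a)\le\mathrm{pos}_R(b)<\mathrm{pos}_R(\bar b)\le\mathrm{pos}_R(\bar a)$ or $\mathrm{pos}_L(a)\le\mathrm{pos}_L(b)<\mathrm{pos}_L(\bar b)\le\mathrm{pos}_R(\bar a)$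 (an $(a,b)$-configuration), then $\mathrm{pos}(b)-\mathrm{pos}(a)+\mathrm{pos}(\bar a)-\mathrm{pos}(\bar b)<b-a$. These tableaux form the crystal basis of the irreducible $Sp(2n,\mathbb{R})$-representation $V_\mu$. Action of a tableau $J$ on a partition $\lambda$ (at most $n$ parts): read the columns of $J$ from the rightmost to the leftmost, each column from top to bottom; a letter $k\le n$ adds one cell to row $k$, a letter $\bar k$ removes one cell from row $k$; if at any step the result is not a Young diagram (partition with at most $n$ rows), the action is undefined. If all steps succeed with final diagram $\nu$, we write $J\cdot\lambda=\nu$. $\emptyset$ denotes the empty partition (trivial representation). *)

theory Defs
  imports Main
begin

text \<open>Letters: natural numbers 1..2n; the letter k (k \<le> n) is unbarred and
  bar k = 2n+1-k. A partition with at most n parts is a weakly decreasing list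
  of length n (trailing zeros allowed). A tableau is a list of columns
  (left to right), each column a list of letters from top to bottom.\<close>

definition bar :: "nat \<Rightarrow> nat \<Rightarrow> nat" where
  "bar n k = 2 * n + 1 - k"

definition is_letter :: "nat \<Rightarrow> nat \<Rightarrow> bool" where
  "is_letter n x \<longleftrightarrow> 1 \<le> x \<and> x \<le> 2 * n"

definition is_partition :: "nat \<Rightarrow> nat list \<Rightarrow> bool" where
  "is_partition n l \<longleftrightarrow> length l = n \<and> sorted_wrt (\<ge>) l"

definition empty_part :: "nat \<Rightarrow> nat list" where
  "empty_part n = replicate n 0"

text \<open>Length of the j-th column (0-indexed) of the Young diagram of mu.\<close>
definition col_len :: "nat list \<Rightarrow> nat \<Rightarrow> nat" where
  "col_len mu j = length (filter (\<lambda>p. j < p) mu)"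

text \<open>Position (1-based, from the top) of a letter a in column J.\<close>
definition pos :: "nat list \<Rightarrow> nat \<Rightarrow> nat" where
  "pos J a = Suc (LEAST i. i < length J \<and> J ! i = a)"

definition is_tableau_of_shape :: "nat \<Rightarrow> nat list \<Rightarrow> nat list list \<Rightarrow> bool" where
  "is_tableau_of_shape n mu T \<longleftrightarrow>
     length T = (if mu = [] then 0 else hd mu) \<and>
     (\<forall>j < length T. length (T ! j) = col_len mu j) \<and>
     (\<forall>J \<in> set T. \<forall>x \<in> set J. is_letter n x)"

definition semistandard :: "nat \<Rightarrow> nat list \<Rightarrow> nat list list \<Rightarrow> bool" where
  "semistandard n mu T \<longleftrightarrow>
     is_tableau_of_shape n mu T \<and>
     (\<forall>J \<in> set T. sorted_wrt (<) J) \<and>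
     (\<forall>j i. Suc j < length T \<and> i < length (T ! Suc j) \<longrightarrow> T ! j ! i \<le> T ! Suc j ! i)"

definition C1 :: "nat \<Rightarrow> nat list \<Rightarrow> bool" where
  "C1 n J \<longleftrightarrow> (\<forall>k. 1 \<le> k \<and> k \<le> n \<and> k \<in> set J \<and> bar n k \<in> set J \<longrightarrow>
      int (pos J k) + (int (length J) + 1 - int (pos J (bar n k))) \<le> int k)"

definition C2 :: "nat \<Rightarrow> nat list \<Rightarrow> nat list \<Rightarrow> bool" where
  "C2 n L R \<longleftrightarrow> (\<forall>a b. 1 \<le> a \<and> a \<le> b \<and> b \<le> n \<and> a \<in> set L \<and> bar n a \<in> set R \<longrightarrow>
      ((b \<in> set R \<and> bar n b \<in> set R \<and>
        pos L a \<le> pos R b \<and> pos R b < pos R (bar n b) \<and> pos R (bar n b) \<le> pos R (bar n a)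
        \<longrightarrow> int (pos R b) - int (pos L a) + int (pos R (bar n a)) - int (pos R (bar n b)) < int b - int a)
      \<and>
      (b \<in> set L \<and> bar n b \<in> set L \<and>
        pos L a \<le> pos L b \<and> pos L b < pos L (bar n b) \<and> pos L (bar n b) \<le> pos R (bar n a)
        \<longrightarrow> int (pos L b) - int (pos L a) + int (pos R (bar n a)) - int (pos L (bar n b)) < int b - int a)))"

definition semistandard_C :: "nat \<Rightarrow> nat list \<Rightarrow> nat list list \<Rightarrow> bool" where
  "semistandard_C n mu T \<longleftrightarrow>
     semistandard n mu T \<and> (\<forall>J \<in> set T. C1 n J) \<and>
     (\<forall>j. Suc j < length T \<longrightarrow> C2 n (T ! j) (T ! Suc j))"

text \<open>The tableau T_mu: the k-th row filled with k, i.e. column j is [1,...,col_len mu j].\<close>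
definition T_mu :: "nat list \<Rightarrow> nat list list" where
  "T_mu mu = map (\<lambda>j. [1..<Suc (col_len mu j)]) [0..<(if mu = [] then 0 else hd mu)]"

text \<open>Action of one letter on a partition (None = undefined).\<close>
definition act_letter :: "nat \<Rightarrow> nat \<Rightarrow> nat list \<Rightarrow> nat list option" where
  "act_letter n x lam =
     (if 1 \<le> x \<and> x \<le> n then
        (let lam' = lam[x - 1 := lam ! (x - 1) + 1] in
         if is_partition n lam' then Some lam' else None)
      else if n < x \<and> x \<le> 2 * n then
        (let k = bar n x in
         if lam ! (k - 1) = 0 then None else
         (let lam' = lam[k - 1 := lam ! (k - 1) - 1] in
          if is_partition n lam' then Some lam' else None))
      else None)"

definition reading_word :: "nat list list \<Rightarrow> nat list" where
  "reading_word T = concat (rev T)"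

definition act_word :: "nat \<Rightarrow> nat list \<Rightarrow> nat list \<Rightarrow> nat list option" where
  "act_word n w lam = fold (\<lambda>x acc. Option.bind acc (act_letter n x)) w (Some lam)"

definition act :: "nat \<Rightarrow> nat list list \<Rightarrow> nat list \<Rightarrow> nat list option" where
  "act n T lam = act_word n (reading_word T) lam"

end

theory Submission
  imports Defs
begin

(* The key notion is the partial shape reached while reading T_mu: after the
   columns j, j+1, ... have been read, the diagram is mu with its first j columns
   deleted (strip_cols mu j); while column j is being read, after its first i
   letters the diagram is strip_cols mu (Suc j) plus one cell in each of the rows
   1..i (partial_col mu j i).  Reading the columns right to left therefore builds
   mu column by column.  Uniqueness is proved by the same right-to-left induction:
   if the columns to the right of column j agree with T_mu, the diagram before
   column j is strip_cols mu (Suc j), whose rows below col_len mu (Suc j) are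
   empty; then the row condition, a general fact about which letters can act on a
   diagram with empty lower rows, and condition (C-1) force column j to be
   1, 2, ..., col_len mu j.  Since T_mu contains only unbarred letters, it
   satisfies (C-1) and (C-2) vacuously, and every step of its reading adds a cell,
   so no intermediate diagram is empty. *)

lemma col_len_le: "col_len mu k \<le> length mu"
  unfolding col_len_def by simp

lemma col_len_iff:
  assumes "sorted_wrt (\<ge>) mu" "r < length mu"
  shows "r < col_len mu k \<longleftrightarrow> k < mu ! r"
  using assms
proof (induction mu arbitrary: r)
  case Nil then show ?case by simp
next
  case (Cons a l)
  have cl: "col_len (a # l) k = (if k < a then 1 else 0) + col_len l k"
    unfolding col_len_def by simp
  have sl: "sorted_wrt (\<ge>) l" and al: "\<forall>x\<in>set l. x \<le> a" using Cons.prems(1) by auto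
  have z: "col_len l k = 0" if "\<not> k < a"
  proof -
    have "filter (\<lambda>p. k < p) l = []" using al that by (force simp: filter_empty_conv)
    then show ?thesis unfolding col_len_def by simp
  qed
  show ?case
  proof (cases r)
    case 0 then show ?thesis using cl z by simp
  next
    case (Suc r')
    have r': "r' < length l" using Cons.prems(2) Suc by simp
    have "l ! r' \<le> a" using al r' by simp
    then show ?thesis using cl z Cons.IH[OF sl r'] Suc by (cases "k < a") simp_all
  qed
qed

lemma col_len_antimono:
  assumes "sorted_wrt (\<ge>) mu"
  shows "col_len mu (Suc j) \<le> col_len mu j"
proof (rule ccontr)
  assume "\<not> ?thesis"
  then have a: "col_len mu j < col_len mu (Suc j)" by simp
  then have r: "col_len mu j < length mu" using col_len_le[of mu "Suc j"] by simp
  have "Suc j < mu ! col_len mu j" using col_len_iff[OF assms r, of "Suc j"] a by simp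
  then show False using col_len_iff[OF assms r, of j] by simp
qed

lemma act_word_None: "fold (\<lambda>x acc. Option.bind acc (act_letter n x)) w None = None"
  by (induction w) auto

lemma act_word_Nil [simp]: "act_word n [] lam = Some lam"
  unfolding act_word_def by simp

lemma act_word_append:
  "act_word n (w1 @ w2) lam = Option.bind (act_word n w1 lam) (act_word n w2)"
  by (cases "act_word n w1 lam") (simp_all add: act_word_def act_word_None)

lemma act_word_snoc:
  "act_word n (w @ [x]) lam = Option.bind (act_word n w lam) (act_letter n x)"
  by (simp add: act_word_append act_word_def split: option.splits)

lemma act_word_prefix_defined:
  "act_word n (w1 @ w2) lam \<noteq> None \<Longrightarrow> act_word n w1 lam \<noteq> None"
  by (cases "act_word n w1 lam") (auto simp: act_word_append)

lemma reading_word_drop: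
  "j < length T \<Longrightarrow> reading_word (drop j T) = reading_word (drop (Suc j) T) @ T ! j"
  by (simp add: Cons_nth_drop_Suc[symmetric] reading_word_def)

lemma reading_word_split:
  "reading_word T = reading_word (drop j T) @ reading_word (take j T)"
  by (metis append_take_drop_id concat_append reading_word_def rev_append)

lemma act_column_defined:
  assumes def: "act n T lam \<noteq> None" and j: "j < length T"
    and suffix: "act_word n (reading_word (drop (Suc j) T)) lam = Some nu"
  shows "act_word n (T ! j) nu \<noteq> None"
proof -
  have "act_word n (reading_word (drop j T)) lam \<noteq> None"
    using def act_word_prefix_defined reading_word_split unfolding act_def by metis
  then show ?thesis using suffix reading_word_drop[OF j] by (simp add: act_word_append)
qed

subsection \<open>The diagrams occurring while T_mu is read\<close>

definition strip_cols :: "nat list \<Rightarrow> nat \<Rightarrow> nat list" where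
  "strip_cols mu j = map (\<lambda>p. p - j) mu"

text \<open>strip_cols mu (Suc j) together with one cell in each of the first i rows:
  the diagram after the top i letters of column j have been read.\<close>
definition partial_col :: "nat list \<Rightarrow> nat \<Rightarrow> nat \<Rightarrow> nat list" where
  "partial_col mu j i = map (\<lambda>r. mu ! r - Suc j + (if r < i then 1 else 0)) [0..<length mu]"

lemma partial_col_nth:
  "r < length mu \<Longrightarrow> partial_col mu j i ! r = mu ! r - Suc j + (if r < i then 1 else 0)"
  unfolding partial_col_def by simp

lemma partial_col_start: "partial_col mu j 0 = strip_cols mu (Suc j)"
  unfolding partial_col_def strip_cols_def by (rule nth_equalityI) auto

lemma partial_col_end:
  assumes "sorted_wrt (\<ge>) mu"
  shows "partial_col mu j (col_len mu j) = strip_cols mu j"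
  by (rule nth_equalityI) (use col_len_iff[OF assms] in \<open>auto simp: partial_col_def strip_cols_def\<close>)

lemma partial_col_partition:
  assumes "is_partition n mu" shows "is_partition n (partial_col mu j i)"
proof -
  have "mu ! b - Suc j + (if b < i then 1 else 0) \<le> mu ! a - Suc j + (if a < i then 1 else 0)"
    if "a < b" "b < length mu" for a b
  proof -
    have "mu ! b \<le> mu ! a" using assms that unfolding is_partition_def
      by (auto simp: sorted_wrt_iff_nth_less)
    then show ?thesis using that by auto
  qed
  then show ?thesis using assms unfolding is_partition_def partial_col_def
    by (auto simp: sorted_wrt_iff_nth_less)
qed

lemma partial_col_empty_rows:
  assumes "is_partition n mu" "col_len mu (Suc j) \<le> r" "i \<le> r" "r < n"
  shows "partial_col mu j i ! r = 0"
proof -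
  have "sorted_wrt (\<ge>) mu" "r < length mu" using assms unfolding is_partition_def by auto
  then show ?thesis using col_len_iff[of mu r "Suc j"] assms(2,3) partial_col_nth by simp
qed

lemma strip_cols_0: "strip_cols mu 0 = mu"
  unfolding strip_cols_def by simp

lemma strip_cols_all:
  assumes "is_partition n mu" "mu \<noteq> []"
  shows "strip_cols mu (hd mu) = empty_part n"
proof -
  have "mu ! r \<le> hd mu" if "r < length mu" for r
    using assms that unfolding is_partition_def
    by (cases r) (auto simp: hd_conv_nth sorted_wrt_iff_nth_less)
  then show ?thesis using assms unfolding strip_cols_def empty_part_def is_partition_def
    by (intro nth_equalityI) auto
qed

lemma act_letter_partial_col:
  assumes "is_partition n mu" "i < n"
  shows "act_letter n (Suc i) (partial_col mu j i) = Some (partial_col mu j (Suc i))"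
proof -
  have l: "length mu = n" using assms unfolding is_partition_def by simp
  have "(partial_col mu j i)[i := partial_col mu j i ! i + 1] = partial_col mu j (Suc i)"
    unfolding partial_col_def using assms l by (intro nth_equalityI) (auto simp: nth_list_update)
  then show ?thesis
    using assms partial_col_partition[OF assms(1)] unfolding act_letter_def Let_def by simp
qed

lemma act_word_column:
  assumes "is_partition n mu" "i \<le> col_len mu j"
  shows "act_word n [1..<Suc i] (strip_cols mu (Suc j)) = Some (partial_col mu j i)"
  using assms(2)
proof (induction i)
  case 0 then show ?case by (simp add: partial_col_start)
next
  case (Suc i)
  have "i < n" using Suc.prems col_len_le[of mu j] assms(1) unfolding is_partition_def by simp
  then show ?case using Suc act_letter_partial_col[OF assms(1)] by (simp add: act_word_snoc)
qed

lemma T_mu_length: "mu \<noteq> [] \<Longrightarrow> length (T_mu mu) = hd mu"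
  unfolding T_mu_def by simp

lemma T_mu_nth: "mu \<noteq> [] \<Longrightarrow> j < hd mu \<Longrightarrow> T_mu mu ! j = [1..<Suc (col_len mu j)]"
  unfolding T_mu_def by simp

lemma T_mu_letters:
  assumes "is_partition n mu" "C \<in> set (T_mu mu)" "y \<in> set C"
  shows "1 \<le> y \<and> y \<le> n"
proof -
  obtain j where "C = [1..<Suc (col_len mu j)]"
    using assms(2) unfolding T_mu_def by (auto simp del: upt_Suc)
  then show ?thesis
    using assms(1,3) col_len_le[of mu j] unfolding is_partition_def by auto
qed

lemma act_T_mu_suffix:
  assumes mu: "is_partition n mu" and ne: "mu \<noteq> []" and j: "j \<le> hd mu"
  shows "act_word n (reading_word (drop j (T_mu mu))) (empty_part n) = Some (strip_cols mu j)"
  using j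
proof (induction j rule: inc_induct)
  case base
  then show ?case using strip_cols_all[OF mu ne] T_mu_length[OF ne] by (simp add: reading_word_def)
next
  case (step j)
  have "act_word n (reading_word (drop j (T_mu mu))) (empty_part n)
      = Option.bind (Some (strip_cols mu (Suc j))) (act_word n [1..<Suc (col_len mu j)])"
    using step T_mu_length[OF ne] T_mu_nth[OF ne]
    by (simp add: reading_word_drop act_word_append del: upt_Suc)
  also have "\<dots> = Some (strip_cols mu j)"
    using act_word_column[OF mu le_refl, of j] partial_col_end[of mu j] mu
    unfolding is_partition_def by simp
  finally show ?case .
qed

lemma act_T_mu:
  assumes "is_partition n mu" "mu \<noteq> []"
  shows "act n (T_mu mu) (empty_part n) = Some mu"
  using act_T_mu_suffix[OF assms, of 0] unfolding act_def by (simp add: strip_cols_0)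

lemma bar_gt: "1 \<le> k \<Longrightarrow> k \<le> n \<Longrightarrow> n < bar n k"
  unfolding bar_def by simp

text \<open>T_mu is a semistandard C-tableau of shape mu; (C-1) and (C-2) hold vacuously
  because no barred letter occurs.\<close>
lemma T_mu_semistandard_C:
  assumes mu: "is_partition n mu" and ne: "mu \<noteq> []"
  shows "semistandard_C n mu (T_mu mu)"
proof -
  have ss: "sorted_wrt (\<ge>) mu" using mu unfolding is_partition_def by simp
  have no_bar: "bar n a \<notin> set C" if "C \<in> set (T_mu mu)" "1 \<le> a" "a \<le> n" for C a
    using T_mu_letters[OF mu that(1)] bar_gt[OF that(2,3)] by fastforce
  have "\<forall>C\<in>set (T_mu mu). \<forall>y\<in>set C. is_letter n y"
    using T_mu_letters[OF mu] unfolding is_letter_def by fastforce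
  then have shape: "is_tableau_of_shape n mu (T_mu mu)"
    using T_mu_length[OF ne] T_mu_nth[OF ne] ne
    unfolding is_tableau_of_shape_def by (auto simp del: upt_Suc)
  have sorted_cols: "\<forall>C\<in>set (T_mu mu). sorted_wrt (<) C"
    unfolding T_mu_def by (auto simp del: upt_Suc)
  have rows: "T_mu mu ! j ! i \<le> T_mu mu ! Suc j ! i"
    if "Suc j < length (T_mu mu)" "i < length (T_mu mu ! Suc j)" for j i
  proof -
    have sj: "Suc j < hd mu" using that T_mu_length[OF ne] by simp
    then have "i < col_len mu (Suc j)" using that T_mu_nth[OF ne sj] by (simp del: upt_Suc)
    then show ?thesis
      using col_len_antimono[OF ss, of j] T_mu_nth[OF ne sj] T_mu_nth[OF ne, of j] sj
      by (simp del: upt_Suc)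
  qed
  have c1: "C1 n C" if "C \<in> set (T_mu mu)" for C
    using no_bar[OF that] unfolding C1_def by blast
  have c2: "C2 n (T_mu mu ! j) (T_mu mu ! Suc j)" if "Suc j < length (T_mu mu)" for j
    using no_bar[OF nth_mem[OF that]] unfolding C2_def by (meson order_trans)
  show ?thesis unfolding semistandard_C_def semistandard_def
    using shape sorted_cols rows c1 c2 by blast
qed

subsection \<open>Uniqueness\<close>

lemma pos_nth:
  assumes "distinct x" "i < length x"
  shows "pos x (x ! i) = Suc i"
proof -
  have "(LEAST i'. i' < length x \<and> x ! i' = x ! i) = i"
    by (rule Least_equality) (use assms nth_eq_iff_index_eq in auto)
  then show ?thesis unfolding pos_def by simp
qed

lemma act_letter_empty_rows:
  assumes y: "is_letter n y" and def: "act_letter n y lam \<noteq> None"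
    and empty: "\<forall>r. i \<le> r \<and> r < n \<longrightarrow> lam ! r = 0"
  shows "y \<le> Suc i \<or> (n < y \<and> bar n y \<le> i)"
proof (rule ccontr)
  assume neg: "\<not> ?thesis"
  show False
  proof (cases "y \<le> n")
    case True
    define lam' where "lam' = lam[y - 1 := lam ! (y - 1) + 1]"
    have p: "is_partition n lam'"
      using def True y unfolding act_letter_def lam'_def is_letter_def Let_def
      by (auto split: if_splits)
    then have len: "length lam = n" unfolding lam'_def is_partition_def by simp
    have "i \<le> y - 2" "y - 1 < n" using neg True by auto
    then have "lam ! (y - 1) = 0" "lam ! (y - 2) = 0" using empty by auto
    then have "lam' ! (y - 1) = 1" "lam' ! (y - 2) = 0"
      unfolding lam'_def using neg len \<open>y - 1 < n\<close> by auto
    moreover have "lam' ! (y - 1) \<le> lam' ! (y - 2)"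
      using p neg True sorted_wrt_nth_less[of "(\<ge>)" lam' "y - 2" "y - 1"]
      unfolding is_partition_def by simp
    ultimately show False by simp
  next
    case False
    have "lam ! (bar n y - 1) \<noteq> 0"
      using def False y unfolding act_letter_def is_letter_def Let_def by (auto split: if_splits)
    moreover have "i \<le> bar n y - 1" "bar n y - 1 < n"
      using neg False y unfolding bar_def is_letter_def by auto
    ultimately show False using empty by auto
  qed
qed

text \<open>(C-1) forbids a column that starts 1, 2, ..., k to contain the barred
  letter of k in any position (its C-1 sum would be the column length plus k
  minus the position of that barred letter, which exceeds k).\<close>
lemma C1_initial_segment:
  assumes c1: "C1 n x" and dist: "distinct x" and k: "1 \<le> k" "k \<le> n"
    and xk: "x ! (k - 1) = k" and i: "k \<le> i" "i < length x" and xi: "x ! i = bar n k"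
  shows False
proof -
  have "pos x k = k" using pos_nth[OF dist, of "k - 1"] xk k i by simp
  moreover have "pos x (bar n k) = Suc i" using pos_nth[OF dist i(2)] xi by simp
  moreover have "k - 1 < length x" using k i by simp
  then have "k \<in> set x" "bar n k \<in> set x"
    using nth_mem[of "k - 1" x] nth_mem[OF i(2)] xk xi by metis+
  ultimately show False using c1 k i unfolding C1_def by fastforce
qed

text \<open>The letter below an initial segment 1, ..., i of a column satisfying (C-1):
  if it lies weakly left of the letter i+1 (when the column to the right is that
  long) and can act on the diagram partial_col mu j i, it is i+1.  Below the
  next column only the rows 1..i are nonempty, so a larger letter would have to
  be barred of some row k <= i, which (C-1) forbids.\<close>
lemma column_next_letter:
  assumes mu: "is_partition n mu"
    and srt: "sorted_wrt (<) x" and c1: "C1 n x"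
    and prefix: "take i x = [1..<Suc i]" and ix: "i < length x"
    and y: "is_letter n (x ! i)"
    and row: "i < col_len mu (Suc j) \<Longrightarrow> x ! i \<le> Suc i"
    and acts: "act_letter n (x ! i) (partial_col mu j i) \<noteq> None"
  shows "x ! i = Suc i"
proof -
  have prefix_nth: "x ! r = Suc r" if "r < i" for r
    using that prefix nth_take[of r i x] by (simp del: upt_Suc)
  have ge: "Suc i \<le> x ! i"
  proof (cases i)
    case 0 then show ?thesis using y unfolding is_letter_def by simp
  next
    case (Suc i')
    then show ?thesis using sorted_wrt_nth_less[OF srt, of i' i] ix prefix_nth[of i'] by simp
  qed
  have "x ! i \<le> Suc i"
  proof (cases "i < col_len mu (Suc j)")
    case True then show ?thesis using row by simp
  next
    case False
    then have "\<forall>r. i \<le> r \<and> r < n \<longrightarrow> partial_col mu j i ! r = 0"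
      using partial_col_empty_rows[OF mu] by simp
    from act_letter_empty_rows[OF y acts this]
    consider "x ! i \<le> Suc i" | "n < x ! i" "bar n (x ! i) \<le> i" by blast
    then show ?thesis
    proof cases
      case 2
      define k where "k = bar n (x ! i)"
      have k: "1 \<le> k" "k \<le> n" "bar n k = x ! i"
        using 2 y unfolding k_def bar_def is_letter_def by auto
      have dist: "distinct x" using srt by (simp add: strict_sorted_iff)
      have "x ! (k - 1) = k" using prefix_nth[of "k - 1"] 2 k unfolding k_def by simp
      then show ?thesis using C1_initial_segment[OF c1 dist k(1,2) _ _ ix] 2 k
        unfolding k_def by simp
    qed
  qed
  then show ?thesis using ge by simp
qed

lemma column_forced:
  assumes mu: "is_partition n mu"
    and srt: "sorted_wrt (<) x" and len: "length x = col_len mu j"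
    and letters: "\<forall>y\<in>set x. is_letter n y" and c1: "C1 n x"
    and row: "\<forall>i < col_len mu (Suc j). x ! i \<le> Suc i"
    and def: "act_word n x (strip_cols mu (Suc j)) \<noteq> None"
  shows "x = [1..<Suc (col_len mu j)]"
proof -
  have "take i x = [1..<Suc i]" if "i \<le> length x" for i
    using that
  proof (induction i)
    case 0 then show ?case by simp
  next
    case (Suc i)
    have ix: "i < length x" using Suc.prems by simp
    have prefix: "take i x = [1..<Suc i]" using Suc by simp
    have take_Suc: "take (Suc i) x = take i x @ [x ! i]"
      using ix by (simp add: take_Suc_conv_app_nth)
    have "act_word n (take (Suc i) x) (strip_cols mu (Suc j)) \<noteq> None"
      using act_word_prefix_defined[of n "take (Suc i) x" "drop (Suc i) x"] def by simp
    moreover have "act_word n (take i x) (strip_cols mu (Suc j)) = Some (partial_col mu j i)"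
      using prefix act_word_column[OF mu, of i j] ix len by simp
    ultimately have "act_letter n (x ! i) (partial_col mu j i) \<noteq> None"
      using take_Suc by (simp add: act_word_snoc)
    then have "x ! i = Suc i"
      using column_next_letter[OF mu srt c1 prefix ix, where j = j] letters row ix by simp
    then show ?case using take_Suc prefix by simp
  qed
  then show ?thesis using len by (metis le_refl take_all)
qed

lemma tableau_forced:
  assumes mu: "is_partition n mu" and ne: "mu \<noteq> []"
    and J: "semistandard_C n mu J" and def: "act n J (empty_part n) \<noteq> None"
    and j: "j \<le> hd mu"
  shows "drop j J = drop j (T_mu mu)"
proof -
  have lJ: "length J = hd mu"
    using J ne unfolding semistandard_C_def semistandard_def is_tableau_of_shape_def by simp
  have lT: "length (T_mu mu) = hd mu" by (rule T_mu_length[OF ne])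
  have ss: "sorted_wrt (\<ge>) mu" using mu unfolding is_partition_def by auto
  have ssJ: "semistandard n mu J" "\<forall>J\<in>set J. C1 n J"
    using J unfolding semistandard_C_def by auto
  show ?thesis using j
  proof (induction j rule: inc_induct)
    case base
    then show ?case using lJ lT by simp
  next
    case (step j)
    define x where "x = J ! j"
    have xin: "x \<in> set J" using step lJ unfolding x_def by simp
    have row: "\<forall>i < col_len mu (Suc j). x ! i \<le> Suc i"
    proof (intro allI impI)
      fix i assume i: "i < col_len mu (Suc j)"
      then have sj: "Suc j < hd mu"
        using col_len_iff[OF ss, of 0 "Suc j"] ne by (simp add: hd_conv_nth)
      have "J ! Suc j = drop (Suc j) J ! 0" using sj lJ by simp
      also have "\<dots> = T_mu mu ! Suc j" using step.IH sj lT by simp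
      finally have JS: "J ! Suc j = [1..<Suc (col_len mu (Suc j))]" using T_mu_nth[OF ne sj] by simp
      have "i < length (J ! Suc j)" using JS i by simp
      moreover have "Suc j < length J" using sj lJ by simp
      ultimately have "J ! j ! i \<le> J ! Suc j ! i"
        using ssJ(1) unfolding semistandard_def by blast
      then show "x ! i \<le> Suc i" using JS i unfolding x_def by (simp del: upt_Suc)
    qed
    have "act_word n (reading_word (drop (Suc j) J)) (empty_part n) = Some (strip_cols mu (Suc j))"
      using step act_T_mu_suffix[OF mu ne] by simp
    then have "act_word n x (strip_cols mu (Suc j)) \<noteq> None"
      using act_column_defined[OF def] step lJ unfolding x_def by simp
    moreover have "sorted_wrt (<) x" "length x = col_len mu j" "\<forall>y\<in>set x. is_letter n y"
      using ssJ(1) xin step lJ unfolding x_def semistandard_def is_tableau_of_shape_def by auto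
    ultimately have "J ! j = T_mu mu ! j"
      using column_forced[OF mu _ _ _ _ row] ssJ(2) xin T_mu_nth[OF ne] step unfolding x_def by simp
    then show ?case using step lJ lT by (metis Cons_nth_drop_Suc)
  qed
qed

text \<open>An unbarred letter adds a cell, so its result is never the empty diagram.\<close>
lemma act_letter_unbarred_nonempty:
  assumes "1 \<le> y" "y \<le> n" "act_letter n y lam = Some nu"
  shows "nu \<noteq> empty_part n"
proof -
  have nu: "nu = lam[y - 1 := lam ! (y - 1) + 1]" "length nu = n"
    using assms unfolding act_letter_def Let_def is_partition_def by (auto split: if_splits)
  then have "nu ! (y - 1) \<noteq> 0" using assms by simp
  moreover have "empty_part n ! (y - 1) = 0" using assms unfolding empty_part_def by simp
  ultimately show ?thesis by metis
qed

lemma unbarred_prefix_nonempty: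
  assumes def: "act_word n w lam \<noteq> None" and unbarred: "\<forall>y\<in>set w. 1 \<le> y \<and> y \<le> n"
    and k: "1 \<le> k" "k \<le> length w"
  shows "\<exists>nu. act_word n (take k w) lam = Some nu \<and> nu \<noteq> empty_part n"
proof -
  have tk: "take k w = take (k - 1) w @ [w ! (k - 1)]"
    using k take_Suc_conv_app_nth[of "k - 1" w] by simp
  have "act_word n (take k w) lam \<noteq> None"
    using def act_word_prefix_defined[of n "take k w" "drop k w"] by simp
  then obtain nu where nu: "act_word n (take k w) lam = Some nu" by auto
  then obtain nu0 where "act_word n (take (k - 1) w) lam = Some nu0"
    using tk act_word_prefix_defined by (metis option.distinct(1) option.exhaust)
  then have "act_letter n (w ! (k - 1)) nu0 = Some nu" using nu tk by (simp add: act_word_snoc)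
  moreover have "1 \<le> w ! (k - 1) \<and> w ! (k - 1) \<le> n" using unbarred k by simp
  ultimately show ?thesis using nu act_letter_unbarred_nonempty by blast
qed

theorem proposition3p3:
  fixes n :: nat and mu :: "nat list"
  assumes "1 \<le> n" and "is_partition n mu"
  shows "semistandard_C n mu (T_mu mu)
    \<and> act n (T_mu mu) (empty_part n) = Some mu
    \<and> (\<forall>J lam. semistandard_C n mu J \<and> act n J (empty_part n) = Some lam
          \<longrightarrow> lam = mu \<and> J = T_mu mu)
    \<and> (mu \<noteq> empty_part n \<longrightarrow>
          (\<forall>k. 1 \<le> k \<and> k \<le> length (reading_word (T_mu mu)) \<longrightarrow>
             (\<exists>nu. act_word n (take k (reading_word (T_mu mu))) (empty_part n) = Some nu
                   \<and> nu \<noteq> empty_part n)))"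
proof -
  have mu: "is_partition n mu" by (rule assms(2))
  have ne: "mu \<noteq> []" using assms unfolding is_partition_def by auto
  have acts: "act n (T_mu mu) (empty_part n) = Some mu" by (rule act_T_mu[OF mu ne])
  have unique: "lam = mu \<and> J = T_mu mu"
    if "semistandard_C n mu J" "act n J (empty_part n) = Some lam" for J lam
    using tableau_forced[OF mu ne that(1), of 0] that acts by simp
  have "\<forall>y\<in>set (reading_word (T_mu mu)). 1 \<le> y \<and> y \<le> n"
    using T_mu_letters[OF mu] unfolding reading_word_def by auto
  then have "\<exists>nu. act_word n (take k (reading_word (T_mu mu))) (empty_part n) = Some nu
                   \<and> nu \<noteq> empty_part n"
    if "1 \<le> k" "k \<le> length (reading_word (T_mu mu))" for k
    using unbarred_prefix_nonempty[OF _ _ that] acts unfolding act_def by simp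
  then show ?thesis using T_mu_semistandard_C[OF mu ne] acts unique by blast
qed

end
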